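(* Let $r\in[2,+\infty)$ and $h_0>0$. Let $Z\in L^r_{\mathbb{R}^q}(\mathbb{P})$ with $\mathbb{E}Z=0$, $a\in\mathbb{R}^d$ and $A\in\mathcal{M}(d,q,\mathbb{R})$. Then for every $h\in(0,h_0)$, $$\mathbb{E}\big|a+\sqrt h\,AZ\big|^r\le|a|^r(1+c^{(1)}_rh)+c^{(2)}_{r,h_0}\,h\,\|A\|^r\,\mathbb{E}|Z|^r,$$ where $c^{(1)}_r=2^{(r-3)_+}\frac{(r-1)(r-2)}{2}$, $c^{(2)}_{r,h_0}=2^{(r-3)_+}(r-1)\big(1+\frac r2h_0^{\frac r2-1}\big)$ and $\|A\|$ is the operator norm of $A$.
   Context: $|\cdot|$ denotes the Euclidean norm and $(x)_+=\max(x,0)$. *)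

theory Defs
  imports "HOL-Probability.Probability"
begin

definition pos_part :: "real \<Rightarrow> real" where
  "pos_part x = max x 0"

definition c1 :: "real \<Rightarrow> real" where
  "c1 r = 2 powr pos_part (r - 3) * ((r - 1) * (r - 2) / 2)"

definition c2 :: "real \<Rightarrow> real \<Rightarrow> real" where
  "c2 r h0 = 2 powr pos_part (r - 3) * (r - 1) * (1 + r / 2 * h0 powr (r / 2 - 1))"

end

theory Submission
  imports Defs
begin

(*
  Expand t \<mapsto> |a + t u|^r to second order on [0, 1]. The first-order term
  r |a|^(r-2) <a, u> is linear in u, so it vanishes in expectation for u = sqrt h A Z
  because E Z = 0. By Cauchy-Schwarz the second derivative is at most
  r (r-1) |u|^2 (|a| + |u|)^(r-2); splitting (|a| + |u|)^(r-2) by convexity of powers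
  (constant 2^((r-3)_+)), applying Young's inequality with exponents r/(r-2) and r/2 to
  |a|^(r-2) |u|^2, and using h^(r/2) <= h h0^(r/2-1) turns the remainder into
  c1 h |a|^r + c2 h |A|^r |Z|^r.
*)

lemma power2_powr:
  fixes x q :: real
  assumes "x \<ge> 0"
  shows "(x^2) powr q = x powr (2 * q)"
  using assms by (cases "x = 0") (simp_all add: powr_powr flip: powr_numeral)

lemma powr_minus_2_mult_power2:
  fixes x s :: real
  assumes "x \<ge> 0"
  shows "x powr (s - 2) * x^2 = x powr s"
  using assms by (cases "x = 0") (simp_all add: powr_diff flip: powr_numeral)

lemma powr_add_le_convex:
  fixes x y s :: real
  assumes "x \<ge> 0" "y \<ge> 0" "s \<ge> 1"
  shows "(x + y) powr s \<le> 2 powr (s - 1) * (x powr s + y powr s)"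
proof (cases "x = 0 \<or> y = 0")
  case True
  have "1 \<le> 2 powr (s - 1)"
    using assms by (intro ge_one_powr_ge_zero) auto
  then have "1 * (x powr s + y powr s) \<le> 2 powr (s - 1) * (x powr s + y powr s)"
    by (intro mult_right_mono) auto
  then show ?thesis
    using True by auto
next
  case False
  with assms have "x > 0" "y > 0"
    by auto
  then have "((1/2) * x + (1/2) * y) powr s \<le> (1/2) * x powr s + (1/2) * y powr s"
    using convex_onD[OF powr_convex[OF \<open>s \<ge> 1\<close>], of "1/2" x y] by auto
  then have "((x + y) / 2) powr s \<le> (x powr s + y powr s) / 2"
    by (simp add: field_simps)
  then have "(x + y) powr s / 2 powr s \<le> (x powr s + y powr s) / 2"
    using assms by (simp add: powr_divide)
  then show ?thesis
    by (simp add: powr_diff field_simps)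
qed

lemma powr_add_le_subadditive:
  fixes x y s :: real
  assumes "x \<ge> 0" "y \<ge> 0" "s \<le> 1"
  shows "(x + y) powr s \<le> x powr s + y powr s"
proof (cases "x = 0 \<or> y = 0")
  case False
  with assms have "x > 0" "y > 0"
    by auto
  then have "(x + y) powr s = (x + y) * (x + y) powr (s - 1)"
    by (simp add: powr_diff)
  also have "\<dots> = x * (x + y) powr (s - 1) + y * (x + y) powr (s - 1)"
    by (simp add: distrib_right)
  also have "\<dots> \<le> x * x powr (s - 1) + y * y powr (s - 1)"
    using \<open>x > 0\<close> \<open>y > 0\<close> assms by (intro add_mono mult_left_mono powr_mono2') auto
  also have "\<dots> = x powr s + y powr s"
    using \<open>x > 0\<close> \<open>y > 0\<close> by (simp add: powr_diff field_simps)
  finally show ?thesis .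
qed auto

lemma powr_add_le:
  fixes x y s :: real
  assumes "x \<ge> 0" "y \<ge> 0"
  shows "(x + y) powr s \<le> 2 powr pos_part (s - 1) * (x powr s + y powr s)"
  using powr_add_le_convex[OF assms] powr_add_le_subadditive[OF assms]
  by (cases "s \<ge> 1") (simp_all add: pos_part_def)

lemma Young_powr_power2:
  fixes x y r :: real
  assumes "x \<ge> 0" "y \<ge> 0" "r \<ge> 2"
  shows "x powr (r - 2) * y^2 \<le> (r - 2) / r * x powr r + 2 / r * y powr r"
proof (cases "r = 2")
  case True
  then show ?thesis
    using assms by (cases "x = 0") simp_all
next
  case False
  with assms have r: "r > 2"
    by simp
  have "x powr (r - 2) * y^2
      \<le> (x powr (r - 2)) powr (r / (r - 2)) / (r / (r - 2)) + (y^2) powr (r / 2) / (r / 2)"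
    using r assms by (intro Youngs_inequality) (auto simp: field_simps)
  also have "(x powr (r - 2)) powr (r / (r - 2)) = x powr r"
    using r by (simp add: powr_powr)
  also have "(y^2) powr (r / 2) = y powr r"
    using assms by (simp add: power2_powr)
  finally show ?thesis
    by (simp add: field_simps)
qed

lemma Taylor_second_order_upper_bound:
  fixes f f' f'' :: "real \<Rightarrow> real" and h B :: real
  assumes "h > 0"
    and f': "\<And>t. 0 \<le> t \<Longrightarrow> t \<le> h \<Longrightarrow> (f has_real_derivative f' t) (at t)"
    and f'': "\<And>t. 0 \<le> t \<Longrightarrow> t \<le> h \<Longrightarrow> (f' has_real_derivative f'' t) (at t)"
    and B: "\<And>t. 0 \<le> t \<Longrightarrow> t \<le> h \<Longrightarrow> f'' t \<le> B"
  shows "f h \<le> f 0 + f' 0 * h + B / 2 * h^2"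
proof -
  define D where "D m = (if m = 0 then f else if m = 1 then f' else f'')" for m :: nat
  have "\<forall>m t. m < 2 \<and> 0 \<le> t \<and> t \<le> h \<longrightarrow> DERIV (D m) t :> D (Suc m) t"
    using f' f'' by (auto simp: D_def less_2_cases_iff)
  then obtain t where t: "0 < t" "t < h" and "f h = f 0 + f' 0 * h + f'' t / 2 * h^2"
    using Maclaurin[of h 2 D f] \<open>h > 0\<close> by (auto simp: D_def numeral_2_eq_2)
  moreover have "f'' t / 2 * h^2 \<le> B / 2 * h^2"
    using B[of t] t by (intro mult_right_mono) auto
  ultimately show ?thesis by linarith
qed

lemma powr_second_derivative_le:
  fixes q q' c p :: real
  assumes "q > 0" "p \<ge> 1" "q'^2 \<le> 2 * c * q"
  shows "p * ((p - 1) * q powr (p - 2) * q'^2 + q powr (p - 1) * c) \<le> p * (2 * p - 1) * c * q powr (p - 1)"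
proof -
  have "(p - 1) * q powr (p - 2) * q'^2 \<le> (p - 1) * q powr (p - 2) * (2 * c * q)"
    using assms by (intro mult_left_mono) auto
  also have "\<dots> = 2 * (p - 1) * c * q powr (p - 1)"
    using \<open>q > 0\<close> by (simp add: powr_diff field_simps power2_eq_square)
  finally have "(p - 1) * q powr (p - 2) * q'^2 + q powr (p - 1) * c \<le> (2 * p - 1) * c * q powr (p - 1)"
    by (simp add: algebra_simps)
  then have "p * ((p - 1) * q powr (p - 2) * q'^2 + q powr (p - 1) * c) \<le> p * ((2 * p - 1) * c * q powr (p - 1))"
    using \<open>p \<ge> 1\<close> by (intro mult_left_mono) auto
  then show ?thesis
    by (simp add: mult.assoc)
qed

lemma powr_Taylor_upper_bound:
  fixes q q' :: "real \<Rightarrow> real" and c p S :: real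
  assumes dq: "\<And>t. (q has_real_derivative q' t) (at t)"
    and dq': "\<And>t. (q' has_real_derivative c) (at t)"
    and q_pos: "\<And>t. q t > 0" and p: "p \<ge> 1"
    and q'_sq: "\<And>t. (q' t)^2 \<le> 2 * c * q t"
    and q_le: "\<And>t. 0 \<le> t \<Longrightarrow> t \<le> 1 \<Longrightarrow> q t \<le> S"
  shows "q 1 powr p \<le> q 0 powr p + p * q 0 powr (p - 1) * q' 0 + p * (2 * p - 1) * c * S powr (p - 1) / 2"
proof -
  define f' where "f' t = p * q t powr (p - 1) * q' t" for t
  define f'' where "f'' t = p * ((p - 1) * q t powr (p - 2) * (q' t)^2 + q t powr (p - 1) * c)" for t
  have "0 \<le> 2 * c * q 0"
    using q'_sq[of 0] zero_le_power2[of "q' 0"] by linarith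
  then have c: "c \<ge> 0"
    using q_pos[of 0] by (simp add: zero_le_mult_iff)
  have df: "((\<lambda>t. q t powr p) has_real_derivative f' t) (at t)" for t
    unfolding f'_def using DERIV_fun_powr[OF dq, of t p] q_pos by (simp add: algebra_simps)
  have df': "(f' has_real_derivative f'' t) (at t)" for t
  proof -
    have "((\<lambda>t. q t powr (p - 1)) has_real_derivative (p - 1) * q t powr (p - 2) * q' t) (at t)"
      using DERIV_fun_powr[OF dq, of t "p - 1"] q_pos by (simp add: algebra_simps)
    then show ?thesis
      unfolding f'_def f''_def mult.assoc
      by (intro DERIV_cmult DERIV_mult[OF _ dq', THEN DERIV_cong]) (auto simp: power2_eq_square algebra_simps)
  qed
  have f''_le: "f'' t \<le> p * (2 * p - 1) * c * S powr (p - 1)" if "0 \<le> t" "t \<le> 1" for t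
  proof -
    have "f'' t \<le> p * (2 * p - 1) * c * q t powr (p - 1)"
      unfolding f''_def by (rule powr_second_derivative_le[OF q_pos p q'_sq])
    also have "\<dots> \<le> p * (2 * p - 1) * c * S powr (p - 1)"
      using p c q_pos[of t] q_le[OF that] by (intro mult_left_mono powr_mono2) auto
    finally show ?thesis .
  qed
  show ?thesis
    using Taylor_second_order_upper_bound[where h = 1, OF _ df df' f''_le] by (simp add: f'_def)
qed

lemma norm_add_power2_plus_powr_le:
  fixes a u :: "'a::real_inner" and p e :: real
  assumes p: "p \<ge> 1" and e: "e > 0"
  shows "((norm (a + u))^2 + e) powr p
    \<le> ((norm a)^2 + e) powr p + 2 * p * ((norm a)^2 + e) powr (p - 1) * inner a u
      + p * (2 * p - 1) * (norm u)^2 * ((norm a + norm u)^2 + e) powr (p - 1)"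
proof -
  \<comment> \<open>The shift e > 0 keeps Q away from 0, where powr is not differentiable;
    it is removed by a limit in the next lemma.\<close>
  define Q where "Q t = (norm a)^2 + 2 * t * inner a u + t^2 * (norm u)^2 + e" for t
  define Q' where "Q' t = 2 * inner a u + 2 * t * (norm u)^2" for t
  have Q_norm: "Q t = (norm (a + t *\<^sub>R u))^2 + e" for t
    unfolding Q_def power2_norm_eq_inner
    by (simp add: inner_add_left inner_add_right inner_commute algebra_simps power2_eq_square)
  have Q_le: "Q t \<le> (norm a + norm u)^2 + e" if "0 \<le> t" "t \<le> 1" for t
  proof -
    have "norm (a + t *\<^sub>R u) \<le> norm a + t * norm u"
      using norm_triangle_ineq[of a "t *\<^sub>R u"] that by simp
    also have "\<dots> \<le> norm a + norm u"
      using that by (simp add: mult_left_le_one_le)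
    finally show ?thesis
      unfolding Q_norm by (simp add: power_mono)
  qed
  have Q'_sq: "(Q' t)^2 \<le> 2 * (2 * (norm u)^2) * Q t" for t
  proof -
    have "Q' t = 2 * inner (a + t *\<^sub>R u) u"
      by (simp add: Q'_def inner_add_left power2_norm_eq_inner algebra_simps)
    then have "(Q' t)^2 \<le> 4 * ((norm (a + t *\<^sub>R u))^2 * (norm u)^2)"
      using Cauchy_Schwarz_ineq[of "a + t *\<^sub>R u" u]
      by (simp add: power_mult_distrib power2_norm_eq_inner)
    also have "\<dots> \<le> 2 * (2 * (norm u)^2) * Q t"
      using e by (simp add: Q_norm power_mult_distrib algebra_simps)
    finally show ?thesis .
  qed
  have "Q 1 powr p \<le> Q 0 powr p + p * Q 0 powr (p - 1) * Q' 0
      + p * (2 * p - 1) * (2 * (norm u)^2) * ((norm a + norm u)^2 + e) powr (p - 1) / 2"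
  proof (rule powr_Taylor_upper_bound[OF _ _ _ p Q'_sq Q_le])
    show "(Q has_real_derivative Q' t) (at t)" "(Q' has_real_derivative 2 * (norm u)^2) (at t)" for t
      unfolding Q_def Q'_def by (auto intro!: derivative_eq_intros)
    show "Q t > 0" for t
      using e by (simp add: Q_norm add_nonneg_pos)
  qed
  then show ?thesis
    by (simp add: Q_norm Q'_def)
qed

lemma norm_add_powr_le:
  fixes a u :: "'a::real_inner" and r :: real
  assumes r: "r \<ge> 2"
  shows "norm (a + u) powr r \<le> norm a powr r + r * norm a powr (r - 2) * inner a u
    + r * (r - 1) / 2 * (norm a + norm u) powr (r - 2) * (norm u)^2"
proof (cases "a = 0")
  case True
  have "1 \<le> r * (r - 1) / 2"
    using r mult_mono[of 2 r 1 "r - 1"] by simp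
  then have "1 * norm u powr r \<le> r * (r - 1) / 2 * norm u powr r"
    by (intro mult_right_mono) auto
  then show ?thesis
    using True by (simp add: mult.assoc powr_minus_2_mult_power2)
next
  case False
  define p where "p = r / 2"
  define R where "R e = ((norm a)^2 + e) powr p + 2 * p * ((norm a)^2 + e) powr (p - 1) * inner a u
    + p * (2 * p - 1) * (norm u)^2 * ((norm a + norm u)^2 + e) powr (p - 1)" for e
  have p: "p \<ge> 1"
    using r by (simp add: p_def)
  have "R e \<ge> ((norm (a + u))^2 + e) powr p" if "e > 0" for e
    unfolding R_def by (rule norm_add_power2_plus_powr_le[OF p that])
  then have "\<forall>\<^sub>F e in at_right 0. R e \<ge> ((norm (a + u))^2 + e) powr p"
    using eventually_at_right_less[of "0::real"] by (auto elim: eventually_mono)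
  moreover have "(R \<longlongrightarrow> R 0) (at_right 0)"
  proof -
    \<comment> \<open>Continuity at e = 0 needs a \<noteq> 0: for p = 1 the factor (|a|^2 + e) powr 0 is 1,
      but 0 powr 0 = 0.\<close>
    have "norm a > 0" "norm a + norm u > 0"
      using False by (simp_all add: add_pos_nonneg)
    then show ?thesis
      unfolding R_def by (intro tendsto_intros) simp_all
  qed
  moreover have "((\<lambda>e. ((norm (a + u))^2 + e) powr p) \<longlongrightarrow> ((norm (a + u))^2 + 0) powr p) (at_right 0)"
    using p eventually_at_right_less[of "0::real"] by (intro tendsto_intros) (auto elim: eventually_mono)
  ultimately have "((norm (a + u))^2) powr p \<le> R 0"
    using tendsto_le[OF trivial_limit_at_right_real] by fastforce
  moreover have "R 0 = norm a powr r + r * norm a powr (r - 2) * inner a u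
    + r * (r - 1) / 2 * (norm a + norm u) powr (r - 2) * (norm u)^2"
    by (simp add: R_def p_def power2_powr)
  ultimately show ?thesis
    by (simp add: p_def power2_powr)
qed

lemma Taylor_remainder_le_c1_c2:
  fixes x y r h h0 :: real
  assumes x: "x \<ge> 0" and y: "y \<ge> 0" and r: "r \<ge> 2" and h: "0 < h" "h < h0"
  shows "r * (r - 1) / 2 * (x + sqrt h * y) powr (r - 2) * (sqrt h * y)^2
    \<le> x powr r * (c1 r * h) + c2 r h0 * h * y powr r"
proof -
  define z where "z = sqrt h * y"
  define K where "K = 2 powr pos_part (r - 3)"
  define H where "H = h0 powr (r / 2 - 1)"
  have z: "z \<ge> 0" "z^2 = h * y^2"
    using h y by (simp_all add: z_def power_mult_distrib)
  have "z powr r = h powr (r / 2) * y powr r"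
    using h y by (simp add: z_def powr_mult powr_half_sqrt[symmetric] powr_powr)
  also have "\<dots> = h * h powr (r / 2 - 1) * y powr r"
    using h by (simp add: powr_diff)
  also have "\<dots> \<le> h * H * y powr r"
    unfolding H_def using h r by (intro mult_right_mono mult_left_mono powr_mono2) auto
  finally have z_powr: "z powr r \<le> h * H * y powr r" .
  have "(x + z) powr (r - 2) \<le> K * (x powr (r - 2) + z powr (r - 2))"
    using powr_add_le[OF x z(1), of "r - 2"] by (simp add: K_def)
  from mult_right_mono[OF this, of "z^2"]
  have "(x + z) powr (r - 2) * z^2 \<le> K * (x powr (r - 2) * z^2 + z powr r)"
    using z(1) by (simp add: distrib_left distrib_right mult.assoc powr_minus_2_mult_power2)
  also have "\<dots> \<le> K * (h * ((r - 2) / r * x powr r + 2 / r * y powr r) + h * H * y powr r)"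
    using Young_powr_power2[OF x y r] h z_powr
    by (intro mult_left_mono add_mono) (auto simp: K_def z mult.left_commute[of _ h])
  finally have "r * (r - 1) / 2 * (x + z) powr (r - 2) * z^2
      \<le> r * (r - 1) / 2 * (K * (h * ((r - 2) / r * x powr r + 2 / r * y powr r) + h * H * y powr r))"
    using r by (simp add: mult.assoc mult_left_mono)
  also have "\<dots> = x powr r * (c1 r * h) + c2 r h0 * h * y powr r"
    using r by (simp add: c1_def c2_def K_def H_def field_simps)
  finally show ?thesis
    unfolding z_def .
qed

lemma norm_add_sqrt_scaleR_powr_le:
  fixes a v :: "'a::real_inner" and r h h0 :: real
  assumes r: "r \<ge> 2" and h: "0 < h" "h < h0"
  shows "norm (a + sqrt h *\<^sub>R v) powr r \<le> norm a powr r * (1 + c1 r * h)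
    + r * norm a powr (r - 2) * sqrt h * inner a v + c2 r h0 * h * norm v powr r"
proof -
  have "norm (a + sqrt h *\<^sub>R v) powr r \<le> norm a powr r + r * norm a powr (r - 2) * inner a (sqrt h *\<^sub>R v)
      + r * (r - 1) / 2 * (norm a + sqrt h * norm v) powr (r - 2) * (sqrt h * norm v)^2"
    using norm_add_powr_le[OF r, of a "sqrt h *\<^sub>R v"] h by simp
  also have "\<dots> \<le> norm a powr r + r * norm a powr (r - 2) * inner a (sqrt h *\<^sub>R v)
      + (norm a powr r * (c1 r * h) + c2 r h0 * h * norm v powr r)"
    using Taylor_remainder_le_c1_c2[OF norm_ge_zero norm_ge_zero r h] by (rule add_left_mono)
  also have "\<dots> = norm a powr r * (1 + c1 r * h)
      + r * norm a powr (r - 2) * sqrt h * inner a v + c2 r h0 * h * norm v powr r"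
    by (simp add: algebra_simps)
  finally show ?thesis .
qed

lemma integrable_of_integrable_norm_powr:
  fixes X :: "'s \<Rightarrow> 'b::{banach, second_countable_topology}"
  assumes "finite_measure M" "r \<ge> 1" "X \<in> borel_measurable M"
    and "integrable M (\<lambda>\<omega>. norm (X \<omega>) powr r)"
  shows "integrable M X"
proof (rule Bochner_Integration.integrable_bound)
  show "integrable M (\<lambda>\<omega>. 1 + norm (X \<omega>) powr r)"
    using assms by (simp add: finite_measure.integrable_const)
  have "norm (X \<omega>) \<le> 1 + norm (X \<omega>) powr r" for \<omega>
  proof (cases "norm (X \<omega>) \<le> 1")
    case False
    then have "norm (X \<omega>) powr 1 \<le> norm (X \<omega>) powr r"
      using assms by (intro powr_mono) auto
    then show ?thesis
      by simp
  qed (simp add: add_increasing2)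
  then show "AE \<omega> in M. norm (X \<omega>) \<le> norm (1 + norm (X \<omega>) powr r)"
    by simp
qed (use assms in simp)

lemma expectation_norm_add_sqrt_scaleR_powr_le:
  fixes M :: "'s measure" and Z :: "'s \<Rightarrow> 'b::{banach, second_countable_topology}"
    and L :: "'b \<Rightarrow> 'a::real_inner" and a :: 'a and r h0 h :: real
  assumes M: "prob_space M" and L: "bounded_linear L"
    and r: "r \<ge> 2" and h: "0 < h" "h < h0"
    and Z: "Z \<in> borel_measurable M" "integrable M (\<lambda>\<omega>. norm (Z \<omega>) powr r)"
    and mean_Z: "integral\<^sup>L M Z = 0"
  shows "(\<integral>\<omega>. norm (a + sqrt h *\<^sub>R L (Z \<omega>)) powr r \<partial>M)
    \<le> norm a powr r * (1 + c1 r * h) + c2 r h0 * h * onorm L powr r * (\<integral>\<omega>. norm (Z \<omega>) powr r \<partial>M)"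
proof -
  interpret prob_space M
    by (rule M)
  define T where "T x = inner a (L x)" for x
  define g where "g \<omega> = norm a powr r * (1 + c1 r * h) + r * norm a powr (r - 2) * sqrt h * T (Z \<omega>)
    + c2 r h0 * h * onorm L powr r * norm (Z \<omega>) powr r" for \<omega>
  have T: "bounded_linear T"
    unfolding T_def by (rule bounded_linear_compose[OF bounded_linear_inner_right L])
  have Z_int: "integrable M Z"
    using r by (intro integrable_of_integrable_norm_powr[OF finite_measure_axioms _ Z]) simp
  define f where "f \<omega> = norm (a + sqrt h *\<^sub>R L (Z \<omega>)) powr r" for \<omega>
  have f_le_g: "f \<omega> \<le> g \<omega>" for \<omega>
  proof -
    have "norm (L (Z \<omega>)) powr r \<le> (onorm L * norm (Z \<omega>)) powr r"
      using r onorm[OF L] by (intro powr_mono2) auto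
    then have "c2 r h0 * h * norm (L (Z \<omega>)) powr r \<le> c2 r h0 * h * (onorm L powr r * norm (Z \<omega>) powr r)"
      using r h onorm_pos_le[OF L] by (intro mult_left_mono) (auto simp: c2_def powr_mult)
    then show ?thesis
      using norm_add_sqrt_scaleR_powr_le[OF r h, of a "L (Z \<omega>)"] by (simp add: f_def g_def T_def mult.assoc)
  qed
  have g_int: "integrable M g"
    unfolding g_def using Z(2) integrable_bounded_linear[OF T Z_int] by auto
  have "f \<in> borel_measurable M"
  proof (unfold f_def, rule borel_measurable_continuous_on[OF _ Z(1)])
    show "continuous_on UNIV (\<lambda>x. norm (a + sqrt h *\<^sub>R L x) powr r)"
      using r by (intro continuous_on_powr' continuous_intros linear_continuous_on L) auto
  qed
  then have f_int: "integrable M f"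
  proof (rule Bochner_Integration.integrable_bound[OF g_int])
    show "AE \<omega> in M. norm (f \<omega>) \<le> norm (g \<omega>)"
      using f_le_g abs_ge_self by (intro AE_I2) (smt (verit) f_def powr_ge_zero real_norm_def)
  qed
  have "(\<integral>\<omega>. norm (a + sqrt h *\<^sub>R L (Z \<omega>)) powr r \<partial>M) \<le> integral\<^sup>L M g"
    using integral_mono[OF f_int g_int f_le_g] by (simp add: f_def)
  also have "integral\<^sup>L M g = norm a powr r * (1 + c1 r * h)
      + c2 r h0 * h * onorm L powr r * (\<integral>\<omega>. norm (Z \<omega>) powr r \<partial>M)"
    using Z(2) integrable_bounded_linear[OF T Z_int] integral_bounded_linear[OF T Z_int]
    by (simp add: g_def[abs_def] prob_space mean_Z T_def linear_0[OF bounded_linear.linear[OF L]])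
  finally show ?thesis .
qed

theorem lemma1:
  fixes M :: "'s measure" and Z :: "'s \<Rightarrow> real^'q" and a :: "real^'d"
    and A :: "real^'q^'d" and r h0 h :: real
  assumes "prob_space M"
    and "r \<ge> 2" and "h0 > 0"
    and "Z \<in> borel_measurable M"
    and "integrable M (\<lambda>\<omega>. norm (Z \<omega>) powr r)"
    and "integral\<^sup>L M Z = 0"
    and "0 < h" and "h < h0"
  shows "(\<integral>\<omega>. norm (a + sqrt h *\<^sub>R (A *v Z \<omega>)) powr r \<partial>M)
         \<le> norm a powr r * (1 + c1 r * h)
           + c2 r h0 * h * onorm (\<lambda>x. A *v x) powr r * (\<integral>\<omega>. norm (Z \<omega>) powr r \<partial>M)"
  using expectation_norm_add_sqrt_scaleR_powr_le[OF assms(1) matrix_vector_mul_bounded_linear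
      assms(2,7,8,4,5,6)] .

end
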